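(* Let $H$ be a complex Hilbert space, $\varphi,\psi:[0,1]\to\mathbb{R}$ continuous, $A\in\mathbb{B}(H)$, $t\in[0,1]$, and put $m(t)=\min\{|\varphi(t)+\psi(t)|,|\varphi(t)-\psi(t)|\}$. Then (1) $\omega_t(\varphi,\psi;A)\ge m(t)\Big(\frac{\|A\|}{2}+\frac{\big|\|\operatorname{Re}A\|-\|\operatorname{Im}A\|\big|}{2}\Big)$; (2) $\omega_t^2(\varphi,\psi;A)\ge m(t)^2\Big(\frac14\|A^*A+AA^*\|+\frac{\big|\|\operatorname{Re}A\|^2-\|\operatorname{Im}A\|^2\big|}{2}\Big)$; (3) $\omega_t^2(\varphi,\psi;A)\ge m(t)^2\Big(\frac14\|A^*A+AA^*\|+\frac{c^2(\operatorname{Re}A)+c^2(\operatorname{Im}A)}{2}+\Big|\frac{\|\operatorname{Re}A\|^2-\|\operatorname{Im}A\|^2}{2}+\frac{c^2(\operatorname{Im}A)-c^2(\operatorname{Re}A)}{2}\Big|\Big)$; (4) $\omega_t^4(\varphi,\psi;A)\ge m(t)^4\Big(\frac1{16}\big\|(A^*A+AA^* )^2+4(\operatorname{Re}(A^2))^2\big\|+\frac12\big|\|\operatorname{Re}A\|^4-\|\operatorname{Im}A\|^4\big|\Big)$.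
   Context: $\operatorname{Re}A=(A+A^* )/2$, $\operatorname{Im}A=(A-A^* )/(2i)$, $S_1(H)$ is the unit sphere of $H$, $c(T)=\inf_{x\in S_1(H)}|\langle Tx,x\rangle|$ is the Crawford number, and $\omega_t(\varphi,\psi;A)=\sup_{x\in S_1(H)}|\langle(\varphi(t)A+\psi(t)A^* )x,x\rangle|$. *)

theory Defs
  imports Complex_Main
begin

class complex_hilbert = ab_group_add +
  fixes scaleC :: "complex \<Rightarrow> 'a \<Rightarrow> 'a"
    and cinner :: "'a \<Rightarrow> 'a \<Rightarrow> complex"
  assumes scaleC_add_right: "scaleC a (x + y) = scaleC a x + scaleC a y"
    and scaleC_add_left: "scaleC (a + b) x = scaleC a x + scaleC b x"
    and scaleC_scaleC: "scaleC a (scaleC b x) = scaleC (a * b) x"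
    and scaleC_one: "scaleC 1 x = x"
    and cinner_add_left: "cinner (x + y) z = cinner x z + cinner y z"
    and cinner_scaleC_left: "cinner (scaleC a x) y = a * cinner x y"
    and cinner_commute: "cinner y x = cnj (cinner x y)"
    and cinner_nonneg: "0 \<le> Re (cinner x x)"
    and cinner_zero_iff: "cinner x x = 0 \<longleftrightarrow> x = 0"
    and hilbert_complete:
      "(\<forall>e>0. \<exists>N. \<forall>m\<ge>N. \<forall>n\<ge>N. sqrt (Re (cinner (X m - X n) (X m - X n))) < e)
        \<Longrightarrow> (\<exists>L. (\<lambda>n. sqrt (Re (cinner (X n - L) (X n - L)))) \<longlonglongrightarrow> 0)"

definition hnorm :: "'a::complex_hilbert \<Rightarrow> real" where
  "hnorm x = sqrt (Re (cinner x x))"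

definition clinear_op :: "('a::complex_hilbert \<Rightarrow> 'a) \<Rightarrow> bool" where
  "clinear_op A \<longleftrightarrow> (\<forall>x y. A (x + y) = A x + A y) \<and> (\<forall>a x. A (scaleC a x) = scaleC a (A x))"

definition bounded_op :: "('a::complex_hilbert \<Rightarrow> 'a) \<Rightarrow> bool" where
  "bounded_op A \<longleftrightarrow> clinear_op A \<and> (\<exists>K. \<forall>x. hnorm (A x) \<le> K * hnorm x)"

definition is_adjoint :: "('a::complex_hilbert \<Rightarrow> 'a) \<Rightarrow> ('a \<Rightarrow> 'a) \<Rightarrow> bool" where
  "is_adjoint A B \<longleftrightarrow> (\<forall>x y. cinner (A x) y = cinner x (B y))"

definition opnorm :: "('a::complex_hilbert \<Rightarrow> 'a) \<Rightarrow> real" where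
  "opnorm A = Sup {hnorm (A x) | x. hnorm x \<le> 1}"

definition ReOp :: "('a::complex_hilbert \<Rightarrow> 'a) \<Rightarrow> ('a \<Rightarrow> 'a) \<Rightarrow> 'a \<Rightarrow> 'a" where
  "ReOp A As = (\<lambda>x. scaleC (1/2) (A x + As x))"

definition ImOp :: "('a::complex_hilbert \<Rightarrow> 'a) \<Rightarrow> ('a \<Rightarrow> 'a) \<Rightarrow> 'a \<Rightarrow> 'a" where
  "ImOp A As = (\<lambda>x. scaleC (1/(2*\<i>)) (A x - As x))"

definition crawford :: "('a::complex_hilbert \<Rightarrow> 'a) \<Rightarrow> real" where
  "crawford T = Inf {cmod (cinner (T x) x) | x. hnorm x = 1}"

definition omega_t :: "real \<Rightarrow> (real \<Rightarrow> real) \<Rightarrow> (real \<Rightarrow> real) \<Rightarrow> ('a::complex_hilbert \<Rightarrow> 'a) \<Rightarrow> ('a \<Rightarrow> 'a) \<Rightarrow> real" where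
  "omega_t t \<phi> \<psi> A As = Sup {cmod (cinner (scaleC (complex_of_real (\<phi> t)) (A x)
                                + scaleC (complex_of_real (\<psi> t)) (As x)) x) | x. hnorm x = 1}"

end

theory Submission
  imports Defs
begin

(* Write A = R + iI with R = Re A and I = Im A self-adjoint. For a unit vector x and
   z = <Ax,x> we have <phi Ax + psi A^*x, x> = phi z + psi (cnj z), whose squared modulus is
   (phi + psi)^2 (Re z)^2 + (phi - psi)^2 (Im z)^2 >= m^2 (<Rx,x>^2 + <Ix,x>^2).
   Bounding <Ix,x>^2 below by c(I)^2 and using that the norm of a self-adjoint operator is
   its numerical radius gives omega^2 >= m^2 (|R|^2 + c(I)^2), and symmetrically
   omega^2 >= m^2 (|I|^2 + c(R)^2). Each of the four right-hand sides is at most m^k times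
   the maximum of two such brackets, since |A| <= |R| + |I|, S = A^*A + AA^* equals
   2 (R^2 + I^2), and S^2 + 4 (Re (A^2))^2 = 8 (R^4 + I^4). *)

global_interpretation scaleC: module "scaleC :: complex \<Rightarrow> 'a \<Rightarrow> 'a::complex_hilbert"
  by standard (fact scaleC_add_right scaleC_add_left scaleC_scaleC scaleC_one)+

lemma cinner_zero_left [simp]: "cinner 0 y = 0"
  using cinner_add_left[of 0 0 y] by simp

lemma cinner_diff_left: "cinner (x - y) z = cinner x z - cinner y z"
  using cinner_add_left[of "x - y" y z] by (simp add: algebra_simps)

lemma cinner_minus_left: "cinner (- x) y = - cinner x y"
  using cinner_diff_left[of 0 x y] by simp

lemma cinner_add_right: "cinner x (y + z) = cinner x y + cinner x z"
  by (subst (1 2 3) cinner_commute) (simp add: cinner_add_left)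

lemma cinner_diff_right: "cinner x (y - z) = cinner x y - cinner x z"
  by (subst (1 2 3) cinner_commute) (simp add: cinner_diff_left)

lemma cinner_scaleC_right: "cinner x (scaleC a y) = cnj a * cinner x y"
  by (subst (1 2) cinner_commute) (simp add: cinner_scaleC_left)

lemma cinner_zero_right [simp]: "cinner x 0 = 0"
  by (subst cinner_commute) simp

lemma cinner_minus_right: "cinner x (- y) = - cinner x y"
  using cinner_diff_right[of x 0 y] by simp

lemmas cinner_simps = cinner_add_left cinner_add_right cinner_diff_left cinner_diff_right
  cinner_minus_left cinner_minus_right cinner_scaleC_left cinner_scaleC_right

lemma cinner_eqI:
  assumes "\<And>y. cinner u y = cinner v y"
  shows "u = v"
proof -
  have "cinner (u - v) (u - v) = 0"
    using assms by (simp add: cinner_diff_left)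
  then show ?thesis
    by (simp add: cinner_zero_iff)
qed

lemma cinner_self_eq: "cinner x x = complex_of_real ((hnorm x)\<^sup>2)"
proof -
  have "Im (cinner x x) = 0"
    using cinner_commute[of x x] by (metis Reals_cnj_iff complex_is_Real_iff)
  then show ?thesis
    by (simp add: hnorm_def cinner_nonneg complex_eq_iff)
qed

lemma hnorm_nonneg [simp]: "0 \<le> hnorm x"
  by (simp add: hnorm_def cinner_nonneg)

lemma hnorm_zero [simp]: "hnorm 0 = 0"
  by (simp add: hnorm_def)

lemma hnorm_eq_zero [simp]: "hnorm x = 0 \<longleftrightarrow> x = 0"
  by (metis cinner_self_eq cinner_zero_iff of_real_eq_0_iff zero_eq_power2)

lemma hnorm_sq: "(hnorm x)\<^sup>2 = Re (cinner x x)"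
  by (simp add: cinner_self_eq)

lemma hnorm_scaleC: "hnorm (scaleC a x) = cmod a * hnorm x"
proof -
  have "cinner (scaleC a x) (scaleC a x) = (a * cnj a) * cinner x x"
    by (simp add: cinner_simps)
  also have "\<dots> = complex_of_real ((cmod a * hnorm x)\<^sup>2)"
    by (simp add: cinner_self_eq power_mult_distrib flip: complex_norm_square)
  finally have "(hnorm (scaleC a x))\<^sup>2 = (cmod a * hnorm x)\<^sup>2"
    by (simp only: cinner_self_eq of_real_eq_iff)
  then show ?thesis
    by simp
qed

lemma cinner_cauchy_schwarz: "cmod (cinner x y) \<le> hnorm x * hnorm y"
proof (cases "y = 0")
  case False
  define Y where "Y = (hnorm y)\<^sup>2"
  define c where "c = cinner x y"
  define t where "t = c / complex_of_real Y"
  have "Y > 0"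
    using False by (simp add: Y_def)
  have "cinner y y = complex_of_real Y" and "cinner y x = cnj c"
    by (simp_all add: Y_def c_def cinner_self_eq cinner_commute[of y x])
  then have "cinner (x - scaleC t y) (x - scaleC t y)
        = cinner x x - cnj t * c - t * cnj c + t * cnj t * complex_of_real Y"
    by (simp add: cinner_simps c_def algebra_simps)
  also have "\<dots> = cinner x x - c * cnj c / complex_of_real Y"
    using \<open>Y > 0\<close> by (simp add: t_def field_simps power2_eq_square)
  also have "\<dots> = complex_of_real ((hnorm x)\<^sup>2 - (cmod c)\<^sup>2 / Y)"
    by (simp add: cinner_self_eq flip: complex_norm_square)
  finally have "0 \<le> (hnorm x)\<^sup>2 - (cmod c)\<^sup>2 / Y"
    by (metis Re_complex_of_real cinner_nonneg)
  then have "(cmod c)\<^sup>2 \<le> (hnorm x * hnorm y)\<^sup>2"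
    using \<open>Y > 0\<close> by (simp add: Y_def field_simps)
  then show ?thesis
    unfolding c_def by (rule power2_le_imp_le) simp
qed simp

lemma hnorm_add_sq: "(hnorm (x + y))\<^sup>2 = (hnorm x)\<^sup>2 + (hnorm y)\<^sup>2 + 2 * Re (cinner x y)"
  by (simp add: hnorm_sq cinner_simps cinner_commute[of y x])

lemma hnorm_diff_sq: "(hnorm (x - y))\<^sup>2 = (hnorm x)\<^sup>2 + (hnorm y)\<^sup>2 - 2 * Re (cinner x y)"
  by (simp add: hnorm_sq cinner_simps cinner_commute[of y x])

lemma hnorm_triangle: "hnorm (x + y) \<le> hnorm x + hnorm y"
proof -
  have "Re (cinner x y) \<le> hnorm x * hnorm y"
    using cinner_cauchy_schwarz complex_Re_le_cmod order_trans by blast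
  then have "(hnorm (x + y))\<^sup>2 \<le> (hnorm x + hnorm y)\<^sup>2"
    by (simp add: hnorm_add_sq power2_sum)
  then show ?thesis
    by (rule power2_le_imp_le) simp
qed

lemma unit_vector_decomp:
  assumes "x \<noteq> 0"
  obtains u where "hnorm u = 1" and "x = scaleC (complex_of_real (hnorm x)) u"
proof
  show "hnorm (scaleC (complex_of_real (1 / hnorm x)) x) = 1"
    using assms by (simp add: hnorm_scaleC norm_divide)
  show "x = scaleC (complex_of_real (hnorm x)) (scaleC (complex_of_real (1 / hnorm x)) x)"
    using assms by simp
qed

lemma clinear_op_iff_module_hom: "clinear_op T \<longleftrightarrow> module_hom scaleC scaleC T"
  by (simp add: clinear_op_def module_hom_iff scaleC.module_axioms)

lemma opnorm_bdd_above:
  assumes "bounded_op T"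
  shows "bdd_above {hnorm (T x) | x. hnorm x \<le> 1}"
proof -
  obtain K where K: "\<And>x. hnorm (T x) \<le> K * hnorm x"
    using assms by (auto simp: bounded_op_def)
  have "hnorm (T x) \<le> \<bar>K\<bar>" if "hnorm x \<le> 1" for x
  proof -
    have "hnorm (T x) \<le> \<bar>K\<bar> * hnorm x"
      using K[of x] by (simp add: mult_right_mono order_trans)
    also have "\<dots> \<le> \<bar>K\<bar>"
      using that by (simp add: mult_left_le)
    finally show ?thesis .
  qed
  then show ?thesis
    by (intro bdd_aboveI[of _ "\<bar>K\<bar>"]) auto
qed

lemma hnorm_le_opnorm: "bounded_op T \<Longrightarrow> hnorm x \<le> 1 \<Longrightarrow> hnorm (T x) \<le> opnorm T"
  unfolding opnorm_def by (rule cSup_upper) (auto intro: opnorm_bdd_above)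

lemma opnorm_nonneg: "bounded_op T \<Longrightarrow> 0 \<le> opnorm T"
  by (rule order_trans[OF hnorm_nonneg hnorm_le_opnorm[of T 0]]) simp_all

lemma hnorm_apply_le:
  assumes "bounded_op T"
  shows "hnorm (T x) \<le> opnorm T * hnorm x"
proof -
  interpret T: module_hom scaleC scaleC T
    using assms by (simp add: bounded_op_def clinear_op_iff_module_hom)
  show ?thesis
  proof (cases "x = 0")
    case False
    then obtain u where "hnorm u = 1" and x: "x = scaleC (complex_of_real (hnorm x)) u"
      by (rule unit_vector_decomp)
    have "T x = scaleC (complex_of_real (hnorm x)) (T u)"
      by (subst x) (simp add: T.scale)
    then have "hnorm (T x) = hnorm x * hnorm (T u)"
      by (simp add: hnorm_scaleC)
    also have "\<dots> \<le> hnorm x * opnorm T"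
      using hnorm_le_opnorm[OF assms, of u] \<open>hnorm u = 1\<close> by (simp add: mult_left_mono)
    finally show ?thesis
      by (simp add: mult.commute)
  qed simp
qed

lemma opnorm_leI:
  assumes "0 \<le> K" and "\<And>x. hnorm (T x) \<le> K * hnorm x"
  shows "opnorm T \<le> K"
  unfolding opnorm_def
proof (rule cSup_least)
  show "{hnorm (T x) |x. hnorm x \<le> 1} \<noteq> {}"
    by (auto intro: exI[of _ 0])
  fix r
  assume "r \<in> {hnorm (T x) |x. hnorm x \<le> 1}"
  then obtain x where "r = hnorm (T x)" and "hnorm x \<le> 1"
    by blast
  then show "r \<le> K"
    using assms(2)[of x] mult_left_le[OF \<open>hnorm x \<le> 1\<close> assms(1)] by simp
qed

lemma hnorm_funpow_le:
  assumes "bounded_op T"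
  shows "hnorm ((T ^^ n) x) \<le> opnorm T ^ n * hnorm x"
proof (induction n)
  case (Suc n)
  have "hnorm ((T ^^ Suc n) x) \<le> opnorm T * hnorm ((T ^^ n) x)"
    using hnorm_apply_le[OF assms] by simp
  also have "\<dots> \<le> opnorm T * (opnorm T ^ n * hnorm x)"
    using Suc opnorm_nonneg[OF assms] by (rule mult_left_mono)
  finally show ?case
    by (simp add: mult.assoc)
qed simp

lemma opnorm_le_sum_funpow:
  assumes "bounded_op P" and "bounded_op Q" and "0 \<le> c"
    and "\<And>x. hnorm (T x) \<le> c * (hnorm ((P ^^ n) x) + hnorm ((Q ^^ n) x))"
  shows "opnorm T \<le> c * (opnorm P ^ n + opnorm Q ^ n)"
proof (rule opnorm_leI)
  show "0 \<le> c * (opnorm P ^ n + opnorm Q ^ n)"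
    by (intro mult_nonneg_nonneg add_nonneg_nonneg zero_le_power opnorm_nonneg assms)
  fix x
  have "hnorm (T x) \<le> c * (hnorm ((P ^^ n) x) + hnorm ((Q ^^ n) x))"
    by (rule assms(4))
  also have "\<dots> \<le> c * ((opnorm P ^ n + opnorm Q ^ n) * hnorm x)"
    using hnorm_funpow_le[OF assms(1)] hnorm_funpow_le[OF assms(2)] assms(3)
    by (simp add: add_mono distrib_right mult_left_mono)
  finally show "hnorm (T x) \<le> c * (opnorm P ^ n + opnorm Q ^ n) * hnorm x"
    by (simp add: mult.assoc)
qed

lemma cmod_cinner_self_le:
  assumes "clinear_op T" and "\<And>x. hnorm x = 1 \<Longrightarrow> cmod (cinner (T x) x) \<le> w"
  shows "cmod (cinner (T z) z) \<le> w * (hnorm z)\<^sup>2"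
proof (cases "z = 0")
  case False
  interpret T: module_hom scaleC scaleC T
    using assms(1) by (simp add: clinear_op_iff_module_hom)
  obtain u where "hnorm u = 1" and z: "z = scaleC (complex_of_real (hnorm z)) u"
    using False by (rule unit_vector_decomp)
  have "cinner (T z) z = complex_of_real ((hnorm z)\<^sup>2) * cinner (T u) u"
    by (subst (1 2) z) (simp add: T.scale cinner_simps power2_eq_square)
  then have "cmod (cinner (T z) z) = (hnorm z)\<^sup>2 * cmod (cinner (T u) u)"
    by (simp add: norm_mult norm_power)
  also have "\<dots> \<le> (hnorm z)\<^sup>2 * w"
    using assms(2)[OF \<open>hnorm u = 1\<close>] by (simp add: mult_left_mono)
  finally show ?thesis
    by (simp add: mult.commute)
qed (simp add: assms(1) clinear_op_iff_module_hom module_hom.zero)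

lemma selfadjoint_hnorm_apply_le:
  assumes lin: "clinear_op T" and sa: "is_adjoint T T" and "0 \<le> w"
    and w: "\<And>x. hnorm x = 1 \<Longrightarrow> cmod (cinner (T x) x) \<le> w"
  shows "hnorm (T x) \<le> w * hnorm x"
proof (cases "T x = 0")
  case False
  interpret T: module_hom scaleC scaleC T
    using lin by (simp add: clinear_op_iff_module_hom)
  have "x \<noteq> 0"
    using False by auto
  then have "hnorm x > 0" and "hnorm (T x) > 0"
    using False by (simp_all add: order_less_le)
  \<comment> \<open>Polarization with \<open>y\<close> the multiple of \<open>T x\<close> of norm \<open>hnorm x\<close>: the difference
    of the quadratic forms at \<open>x \<pm> y\<close> is \<open>4 * hnorm x * hnorm (T x)\<close>, while the
    parallelogram law bounds it by \<open>4 * w * (hnorm x)\<^sup>2\<close>.\<close>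
  define y where "y = scaleC (complex_of_real (hnorm x / hnorm (T x))) (T x)"
  have "hnorm y = hnorm x"
    using False by (simp add: y_def hnorm_scaleC norm_divide)
  have Txy: "cinner (T x) y = complex_of_real (hnorm x * hnorm (T x))"
    using \<open>hnorm (T x) > 0\<close> by (simp add: y_def cinner_simps cinner_self_eq power2_eq_square)
  have "cinner (T y) x = cnj (cinner (T x) y)"
    using sa unfolding is_adjoint_def by (metis cinner_commute)
  then have "cinner (T (x + y)) (x + y) - cinner (T (x - y)) (x - y)
        = complex_of_real (4 * (hnorm x * hnorm (T x)))"
    by (simp add: T.add T.diff cinner_simps Txy algebra_simps)
  then have "4 * (hnorm x * hnorm (T x))
        \<le> cmod (cinner (T (x + y)) (x + y)) + cmod (cinner (T (x - y)) (x - y))"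
    by (metis Re_complex_of_real complex_Re_le_cmod norm_triangle_ineq4 order_trans)
  also have "\<dots> \<le> w * ((hnorm (x + y))\<^sup>2 + (hnorm (x - y))\<^sup>2)"
    using cmod_cinner_self_le[OF lin w] by (simp add: distrib_left add_mono)
  also have "\<dots> = w * (4 * (hnorm x)\<^sup>2)"
    by (simp add: hnorm_add_sq hnorm_diff_sq \<open>hnorm y = hnorm x\<close>)
  also have "\<dots> = 4 * (hnorm x * (w * hnorm x))"
    by (simp add: power2_eq_square)
  finally show ?thesis
    using \<open>hnorm x > 0\<close> by simp
qed (simp add: \<open>0 \<le> w\<close>)

lemma selfadjoint_opnorm_le:
  assumes "clinear_op T" and "is_adjoint T T" and "0 \<le> w"
    and "\<And>x. hnorm x = 1 \<Longrightarrow> cmod (cinner (T x) x) \<le> w"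
  shows "opnorm T \<le> w"
  using assms by (intro opnorm_leI selfadjoint_hnorm_apply_le)

lemma selfadjoint_bounded_op:
  assumes "clinear_op T" and "is_adjoint T T" and "0 \<le> w"
    and "\<And>x. hnorm x = 1 \<Longrightarrow> cmod (cinner (T x) x) \<le> w"
  shows "bounded_op T"
  using assms selfadjoint_hnorm_apply_le unfolding bounded_op_def by blast

lemma crawford_le: "hnorm x = 1 \<Longrightarrow> crawford T \<le> cmod (cinner (T x) x)"
  unfolding crawford_def by (rule cInf_lower) (auto intro: bdd_belowI[of _ 0])

lemma crawford_nonneg:
  fixes T :: "'a::complex_hilbert \<Rightarrow> 'a"
  assumes "\<exists>x::'a. hnorm x = 1"
  shows "0 \<le> crawford T"
  unfolding crawford_def by (rule cInf_greatest) (use assms in auto)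

lemma opnorm_sq_add_crawford_sq_le:
  fixes P Q :: "'a::complex_hilbert \<Rightarrow> 'a"
  assumes "clinear_op P" and "is_adjoint P P" and "0 \<le> \<mu>" and "\<exists>x::'a. hnorm x = 1"
    and bound: "\<And>x. hnorm x = 1 \<Longrightarrow>
      \<mu> * ((cmod (cinner (P x) x))\<^sup>2 + (cmod (cinner (Q x) x))\<^sup>2) \<le> b"
  shows "\<mu> * ((opnorm P)\<^sup>2 + (crawford Q)\<^sup>2) \<le> b"
proof -
  obtain x0 :: 'a where "hnorm x0 = 1"
    using assms(4) by blast
  have crawford_sq: "(crawford Q)\<^sup>2 \<le> (cmod (cinner (Q x) x))\<^sup>2" if "hnorm x = 1" for x
    using crawford_le[OF that] crawford_nonneg[OF assms(4)] by (simp add: power_mono)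
  show ?thesis
  proof (cases "\<mu> = 0")
    case True
    then show ?thesis
      using bound[OF \<open>hnorm x0 = 1\<close>] by simp
  next
    case False
    define w where "w = sqrt ((b - \<mu> * (crawford Q)\<^sup>2) / \<mu>)"
    have P_quad: "cmod (cinner (P x) x) \<le> w" if "hnorm x = 1" for x
    proof -
      have "\<mu> * (cmod (cinner (P x) x))\<^sup>2 \<le> b - \<mu> * (crawford Q)\<^sup>2"
        using bound[OF that] crawford_sq[OF that] \<open>0 \<le> \<mu>\<close>
        by (smt (verit, best) distrib_left mult_left_mono)
      then show ?thesis
        using False \<open>0 \<le> \<mu>\<close> by (simp add: w_def real_le_rsqrt field_simps)
    qed
    have "0 \<le> w"
      using P_quad[OF \<open>hnorm x0 = 1\<close>] norm_ge_zero order_trans by blast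
    then have "0 \<le> opnorm P" and "opnorm P \<le> w"
      using selfadjoint_bounded_op[OF assms(1,2) _ P_quad] selfadjoint_opnorm_le[OF assms(1,2) _ P_quad]
      by (auto intro: opnorm_nonneg)
    then have "(opnorm P)\<^sup>2 \<le> (b - \<mu> * (crawford Q)\<^sup>2) / \<mu>"
      using \<open>0 \<le> w\<close> by (metis power_mono real_sqrt_ge_0_iff real_sqrt_pow2_iff w_def)
    then show ?thesis
      using False \<open>0 \<le> \<mu>\<close> by (simp add: field_simps)
  qed
qed

lemma cmod_real_combination_cnj_sq:
  "(cmod (complex_of_real a * z + complex_of_real b * cnj z))\<^sup>2
     = (a + b)\<^sup>2 * (Re z)\<^sup>2 + (a - b)\<^sup>2 * (Im z)\<^sup>2"
  by (subst cmod_power2) (simp add: power2_eq_square algebra_simps)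

locale bounded_operator =
  fixes A As :: "'a::complex_hilbert \<Rightarrow> 'a"
  assumes bounded: "bounded_op A" and adjoint: "is_adjoint A As"
begin

abbreviation "R \<equiv> ReOp A As"
abbreviation "I \<equiv> ImOp A As"

lemma cinner_A_left: "cinner (A x) y = cinner x (As y)"
  using adjoint by (simp add: is_adjoint_def)

lemma cinner_As_left: "cinner (As x) y = cinner x (A y)"
  by (metis cinner_A_left cinner_commute)

lemma cinner_As_self: "cinner (As x) x = cnj (cinner (A x) x)"
  by (metis cinner_As_left cinner_commute)

lemma clinear_adjoint: "clinear_op As"
  unfolding clinear_op_def
proof (intro conjI allI)
  show "As (x + y) = As x + As y" for x y
    by (rule cinner_eqI) (simp add: cinner_As_left cinner_simps)
  show "As (scaleC a x) = scaleC a (As x)" for a x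
    by (rule cinner_eqI) (simp add: cinner_As_left cinner_simps)
qed

sublocale A: module_hom scaleC scaleC A
  using bounded by (simp add: bounded_op_def clinear_op_iff_module_hom)

sublocale As: module_hom scaleC scaleC As
  using clinear_adjoint by (simp add: clinear_op_iff_module_hom)

lemma clinear_ReOp: "clinear_op R" and clinear_ImOp: "clinear_op I"
  unfolding clinear_op_def ReOp_def ImOp_def
  by (simp_all add: A.add As.add A.diff As.diff A.scale As.scale scaleC.scale_right_distrib
      scaleC.scale_right_diff_distrib mult_ac)

lemma ReOp_selfadjoint: "is_adjoint R R" and ImOp_selfadjoint: "is_adjoint I I"
  by (simp_all add: is_adjoint_def ReOp_def ImOp_def cinner_simps cinner_A_left cinner_As_left
      right_diff_distrib)

lemma cinner_ReOp_self: "cinner (R x) x = complex_of_real (Re (cinner (A x) x))"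
  by (simp add: ReOp_def cinner_simps cinner_As_self complex_eq_iff)

lemma cinner_ImOp_self: "cinner (I x) x = complex_of_real (Im (cinner (A x) x))"
  by (simp add: ImOp_def cinner_simps cinner_As_self complex_eq_iff)

lemma cmod_cinner_self_le_opnorm: "hnorm x = 1 \<Longrightarrow> cmod (cinner (A x) x) \<le> opnorm A"
  using cinner_cauchy_schwarz[of "A x" x] hnorm_apply_le[OF bounded, of x] by simp

lemma bounded_ReOp: "bounded_op R"
proof (rule selfadjoint_bounded_op[OF clinear_ReOp ReOp_selfadjoint opnorm_nonneg[OF bounded]])
  show "cmod (cinner (R x) x) \<le> opnorm A" if "hnorm x = 1" for x
    using cmod_cinner_self_le_opnorm[OF that] abs_Re_le_cmod[of "cinner (A x) x"]
    by (simp add: cinner_ReOp_self)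
qed

lemma bounded_ImOp: "bounded_op I"
proof (rule selfadjoint_bounded_op[OF clinear_ImOp ImOp_selfadjoint opnorm_nonneg[OF bounded]])
  show "cmod (cinner (I x) x) \<le> opnorm A" if "hnorm x = 1" for x
    using cmod_cinner_self_le_opnorm[OF that] abs_Im_le_cmod[of "cinner (A x) x"]
    by (simp add: cinner_ImOp_self)
qed

lemmas linear_simps = A.add A.diff A.neg A.scale As.add As.diff As.neg As.scale

lemma A_eq_ReOp_ImOp: "A x = R x + scaleC \<i> (I x)"
  by (rule cinner_eqI) (simp add: ReOp_def ImOp_def linear_simps cinner_simps field_simps)

lemma adjoint_products_eq: "As (A x) + A (As x) = scaleC 2 (R (R x) + I (I x))"
  by (rule cinner_eqI) (simp add: ReOp_def ImOp_def linear_simps cinner_simps field_simps)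

text \<open>Here \<open>(A\<^sup>*A + AA\<^sup>*)\<^sup>2 = 4(R\<^sup>2 + I\<^sup>2)\<^sup>2\<close> and \<open>Re (A\<^sup>2) = R\<^sup>2 - I\<^sup>2\<close>.\<close>

lemma adjoint_products_sq_eq:
  "(As (A (As (A x) + A (As x))) + A (As (As (A x) + A (As x))))
     + scaleC 4 (ReOp (A \<circ> A) (As \<circ> As) (ReOp (A \<circ> A) (As \<circ> As) x))
   = scaleC 8 (R (R (R (R x))) + I (I (I (I x))))"
  by (rule cinner_eqI) (simp add: ReOp_def ImOp_def linear_simps cinner_simps field_simps)

lemma opnorm_le_ReOp_ImOp: "opnorm A \<le> opnorm R + opnorm I"
proof -
  have "hnorm (A x) \<le> 1 * (hnorm ((R ^^ 1) x) + hnorm ((I ^^ 1) x))" for x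
    using hnorm_triangle[of "R x" "scaleC \<i> (I x)"] by (simp add: A_eq_ReOp_ImOp hnorm_scaleC)
  from opnorm_le_sum_funpow[OF bounded_ReOp bounded_ImOp _ this] show ?thesis
    by simp
qed

lemma opnorm_adjoint_products_le:
  "opnorm (\<lambda>x. As (A x) + A (As x)) \<le> 2 * ((opnorm R)\<^sup>2 + (opnorm I)\<^sup>2)"
proof -
  have "hnorm (As (A x) + A (As x)) \<le> 2 * (hnorm ((R ^^ 2) x) + hnorm ((I ^^ 2) x))" for x
    using hnorm_triangle[of "R (R x)" "I (I x)"]
    by (simp add: adjoint_products_eq hnorm_scaleC numeral_2_eq_2)
  from opnorm_le_sum_funpow[OF bounded_ReOp bounded_ImOp _ this] show ?thesis
    by simp
qed

lemma opnorm_adjoint_products_sq_le: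
  "opnorm (\<lambda>x. (As (A (As (A x) + A (As x))) + A (As (As (A x) + A (As x))))
       + scaleC 4 (ReOp (A \<circ> A) (As \<circ> As) (ReOp (A \<circ> A) (As \<circ> As) x)))
     \<le> 8 * (opnorm R ^ 4 + opnorm I ^ 4)"
proof -
  have "hnorm ((As (A (As (A x) + A (As x))) + A (As (As (A x) + A (As x))))
       + scaleC 4 (ReOp (A \<circ> A) (As \<circ> As) (ReOp (A \<circ> A) (As \<circ> As) x)))
      \<le> 8 * (hnorm ((R ^^ 4) x) + hnorm ((I ^^ 4) x))" for x
    using hnorm_triangle[of "R (R (R (R x)))" "I (I (I (I x)))"]
    by (simp add: adjoint_products_sq_eq hnorm_scaleC numeral_eq_Suc)
  from opnorm_le_sum_funpow[OF bounded_ReOp bounded_ImOp _ this] show ?thesis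
    by simp
qed

lemma cinner_combination_self:
  "cinner (scaleC (complex_of_real a) (A x) + scaleC (complex_of_real b) (As x)) x
     = complex_of_real a * cinner (A x) x + complex_of_real b * cnj (cinner (A x) x)"
  by (simp add: cinner_simps cinner_As_self)

lemma cmod_cinner_le_omega_t:
  assumes "hnorm x = 1"
  shows "cmod (cinner (scaleC (complex_of_real (\<phi> t)) (A x) + scaleC (complex_of_real (\<psi> t)) (As x)) x)
    \<le> omega_t t \<phi> \<psi> A As"
  unfolding omega_t_def
proof (rule cSup_upper)
  have "cmod (cinner (scaleC (complex_of_real (\<phi> t)) (A y) + scaleC (complex_of_real (\<psi> t)) (As y)) y)
      \<le> (\<bar>\<phi> t\<bar> + \<bar>\<psi> t\<bar>) * opnorm A" if "hnorm y = 1" for y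
  proof -
    have "cmod (cinner (scaleC (complex_of_real (\<phi> t)) (A y) + scaleC (complex_of_real (\<psi> t)) (As y)) y)
       \<le> \<bar>\<phi> t\<bar> * cmod (cinner (A y) y) + \<bar>\<psi> t\<bar> * cmod (cinner (A y) y)"
      unfolding cinner_combination_self by (rule order_trans[OF norm_triangle_ineq]) (simp add: norm_mult)
    also have "\<dots> \<le> (\<bar>\<phi> t\<bar> + \<bar>\<psi> t\<bar>) * opnorm A"
      using cmod_cinner_self_le_opnorm[OF that] by (simp add: distrib_right add_mono mult_left_mono)
    finally show ?thesis .
  qed
  then show "bdd_above {cmod (cinner (scaleC (complex_of_real (\<phi> t)) (A x)
      + scaleC (complex_of_real (\<psi> t)) (As x)) x) |x. hnorm x = 1}"
    by (intro bdd_aboveI[of _ "(\<bar>\<phi> t\<bar> + \<bar>\<psi> t\<bar>) * opnorm A"]) auto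
qed (use assms in blast)

lemma omega_t_nonneg:
  assumes "\<exists>x::'a. hnorm x = 1"
  shows "0 \<le> omega_t t \<phi> \<psi> A As"
  using assms cmod_cinner_le_omega_t norm_ge_zero order_trans by blast

lemma omega_t_sq_ge:
  assumes "hnorm x = 1"
  shows "(min \<bar>\<phi> t + \<psi> t\<bar> \<bar>\<phi> t - \<psi> t\<bar>)\<^sup>2
      * ((cmod (cinner (R x) x))\<^sup>2 + (cmod (cinner (I x) x))\<^sup>2) \<le> (omega_t t \<phi> \<psi> A As)\<^sup>2"
proof -
  define m where "m = min \<bar>\<phi> t + \<psi> t\<bar> \<bar>\<phi> t - \<psi> t\<bar>"
  define z where "z = cinner (A x) x"
  have "0 \<le> m" and "m \<le> \<bar>\<phi> t + \<psi> t\<bar>" and "m \<le> \<bar>\<phi> t - \<psi> t\<bar>"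
    by (simp_all add: m_def)
  then have "m\<^sup>2 \<le> (\<phi> t + \<psi> t)\<^sup>2" and "m\<^sup>2 \<le> (\<phi> t - \<psi> t)\<^sup>2"
    using power_mono[of m _ 2] by fastforce+
  then have "m\<^sup>2 * ((Re z)\<^sup>2 + (Im z)\<^sup>2) \<le> (\<phi> t + \<psi> t)\<^sup>2 * (Re z)\<^sup>2 + (\<phi> t - \<psi> t)\<^sup>2 * (Im z)\<^sup>2"
    by (simp add: distrib_left add_mono mult_right_mono)
  also have "\<dots> = (cmod (cinner (scaleC (complex_of_real (\<phi> t)) (A x)
      + scaleC (complex_of_real (\<psi> t)) (As x)) x))\<^sup>2"
    by (simp add: cinner_combination_self cmod_real_combination_cnj_sq z_def)
  also have "\<dots> \<le> (omega_t t \<phi> \<psi> A As)\<^sup>2"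
    using cmod_cinner_le_omega_t[OF assms] by (simp add: power_mono)
  finally show ?thesis
    by (simp add: m_def z_def cinner_ReOp_self cinner_ImOp_self)
qed

lemma omega_t_sq_ge_opnorm_crawford:
  fixes \<phi> \<psi> :: "real \<Rightarrow> real" and t :: real
  assumes unit: "\<exists>x::'a. hnorm x = 1"
  defines "m \<equiv> min \<bar>\<phi> t + \<psi> t\<bar> \<bar>\<phi> t - \<psi> t\<bar>"
  shows "m\<^sup>2 * ((opnorm R)\<^sup>2 + (crawford I)\<^sup>2) \<le> (omega_t t \<phi> \<psi> A As)\<^sup>2"
    and "m\<^sup>2 * ((opnorm I)\<^sup>2 + (crawford R)\<^sup>2) \<le> (omega_t t \<phi> \<psi> A As)\<^sup>2"
proof -
  have pointwise: "m\<^sup>2 * ((cmod (cinner (R x) x))\<^sup>2 + (cmod (cinner (I x) x))\<^sup>2)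
      \<le> (omega_t t \<phi> \<psi> A As)\<^sup>2" if "hnorm x = 1" for x
    unfolding m_def by (rule omega_t_sq_ge[OF that])
  show "m\<^sup>2 * ((opnorm R)\<^sup>2 + (crawford I)\<^sup>2) \<le> (omega_t t \<phi> \<psi> A As)\<^sup>2"
    by (rule opnorm_sq_add_crawford_sq_le[OF clinear_ReOp ReOp_selfadjoint _ unit pointwise]) simp
  show "m\<^sup>2 * ((opnorm I)\<^sup>2 + (crawford R)\<^sup>2) \<le> (omega_t t \<phi> \<psi> A As)\<^sup>2"
    by (rule opnorm_sq_add_crawford_sq_le[OF clinear_ImOp ImOp_selfadjoint _ unit])
      (use pointwise in \<open>simp_all add: add.commute\<close>)
qed

lemma omega_t_ge_max:
  fixes \<phi> \<psi> :: "real \<Rightarrow> real" and t :: real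
  assumes unit: "\<exists>x::'a. hnorm x = 1"
  defines "m \<equiv> min \<bar>\<phi> t + \<psi> t\<bar> \<bar>\<phi> t - \<psi> t\<bar>" and "\<omega> \<equiv> omega_t t \<phi> \<psi> A As"
  shows "m * max (opnorm R) (opnorm I) \<le> \<omega>"
    and "m\<^sup>2 * max ((opnorm R)\<^sup>2) ((opnorm I)\<^sup>2) \<le> \<omega>\<^sup>2"
    and "m\<^sup>2 * max ((opnorm R)\<^sup>2 + (crawford I)\<^sup>2) ((opnorm I)\<^sup>2 + (crawford R)\<^sup>2) \<le> \<omega>\<^sup>2"
    and "m ^ 4 * max (opnorm R ^ 4) (opnorm I ^ 4) \<le> \<omega> ^ 4"
proof -
  note bound_R = omega_t_sq_ge_opnorm_crawford(1)[OF unit, of \<phi> t \<psi>, folded m_def \<omega>_def]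
  note bound_I = omega_t_sq_ge_opnorm_crawford(2)[OF unit, of \<phi> t \<psi>, folded m_def \<omega>_def]
  have "0 \<le> m\<^sup>2 * (crawford I)\<^sup>2" and "0 \<le> m\<^sup>2 * (crawford R)\<^sup>2"
    by simp_all
  then have sq_R: "(m * opnorm R)\<^sup>2 \<le> \<omega>\<^sup>2" and sq_I: "(m * opnorm I)\<^sup>2 \<le> \<omega>\<^sup>2"
    using bound_R bound_I unfolding power_mult_distrib distrib_left by linarith+
  have "0 \<le> \<omega>"
    unfolding \<omega>_def by (rule omega_t_nonneg[OF unit])
  then show "m * max (opnorm R) (opnorm I) \<le> \<omega>"
    using power2_le_imp_le[OF sq_R] power2_le_imp_le[OF sq_I] by (simp add: max_def)
  show "m\<^sup>2 * max ((opnorm R)\<^sup>2) ((opnorm I)\<^sup>2) \<le> \<omega>\<^sup>2"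
    using sq_R sq_I by (simp add: max_def power_mult_distrib)
  show "m\<^sup>2 * max ((opnorm R)\<^sup>2 + (crawford I)\<^sup>2) ((opnorm I)\<^sup>2 + (crawford R)\<^sup>2) \<le> \<omega>\<^sup>2"
    using bound_R bound_I by (simp add: max_def)
  show "m ^ 4 * max (opnorm R ^ 4) (opnorm I ^ 4) \<le> \<omega> ^ 4"
    using power_mono[OF sq_R, of 2] power_mono[OF sq_I, of 2]
    by (simp add: max_def power_mult_distrib flip: power_mult)
qed

end

theorem theorem3p2:
  fixes A As :: "'a::complex_hilbert \<Rightarrow> 'a"
    and \<phi> \<psi> :: "real \<Rightarrow> real" and t :: real
  assumes "continuous_on {0..1} \<phi>" and "continuous_on {0..1} \<psi>"
    and "bounded_op A" and "is_adjoint A As"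
    and "t \<in> {0..1}"
    and "\<exists>x::'a. x \<noteq> 0"
  defines "m \<equiv> min \<bar>\<phi> t + \<psi> t\<bar> \<bar>\<phi> t - \<psi> t\<bar>"
  shows "(omega_t t \<phi> \<psi> A As \<ge>
           m * (opnorm A / 2 + \<bar>opnorm (ReOp A As) - opnorm (ImOp A As)\<bar> / 2))
    \<and> ((omega_t t \<phi> \<psi> A As)^2 \<ge>
           m^2 * (opnorm (\<lambda>x. As (A x) + A (As x)) / 4
                  + \<bar>(opnorm (ReOp A As))^2 - (opnorm (ImOp A As))^2\<bar> / 2))
    \<and> ((omega_t t \<phi> \<psi> A As)^2 \<ge>
           m^2 * (opnorm (\<lambda>x. As (A x) + A (As x)) / 4
                  + ((crawford (ReOp A As))^2 + (crawford (ImOp A As))^2) / 2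
                  + \<bar>((opnorm (ReOp A As))^2 - (opnorm (ImOp A As))^2) / 2
                     + ((crawford (ImOp A As))^2 - (crawford (ReOp A As))^2) / 2\<bar>))
    \<and> ((omega_t t \<phi> \<psi> A As)^4 \<ge>
           m^4 * (opnorm (\<lambda>x. (As (A (As (A x) + A (As x))) + A (As (As (A x) + A (As x))))
                             + scaleC 4 (ReOp (A \<circ> A) (As \<circ> As) (ReOp (A \<circ> A) (As \<circ> As) x))) / 16
                  + \<bar>(opnorm (ReOp A As))^4 - (opnorm (ImOp A As))^4\<bar> / 2))"
proof -
  \<comment> \<open>Neither continuity of \<open>\<phi>\<close>, \<open>\<psi>\<close> nor \<open>t \<in> {0..1}\<close> is needed: the bounds hold pointwise in \<open>t\<close>.\<close>
  interpret bounded_operator A As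
    using assms(3,4) by unfold_locales
  have unit: "\<exists>x::'a. hnorm x = 1"
    using assms(6) unit_vector_decomp by meson
  have "0 \<le> m"
    by (simp add: m_def)
  note bounds = omega_t_ge_max[OF unit, of \<phi> t \<psi>, folded m_def]
  show ?thesis
    by (rule conjI[OF order_trans[OF mult_left_mono bounds(1)]
          conjI[OF order_trans[OF mult_left_mono bounds(2)]
          conjI[OF order_trans[OF mult_left_mono bounds(3)]
                   order_trans[OF mult_left_mono bounds(4)]]]])
      (use \<open>0 \<le> m\<close> opnorm_le_ReOp_ImOp opnorm_adjoint_products_le opnorm_adjoint_products_sq_le
        in \<open>auto simp: max_def abs_if field_simps\<close>)
qed

end
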